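(* Let $n\geqslant 3$ and $k=n/2$. For a vertex $\pi$ of $P_n$ with $\pi_1=i$ and $\pi_n=j$ (so $i\neq j$), define $$f(\pi)=\begin{cases} i-j, & i>j,\\ n+i-j, & i<j,\end{cases}$$ and $$c(\pi)=f(\pi)+\varepsilon(\pi),$$ where $$\varepsilon(\pi)=\begin{cases} +1, & j>k \text{ and } f(\pi)=k,\\ -1, & j>k \text{ and } f(\pi)=k+1,\\ 0, & \text{otherwise}.\end{cases}$$ (For $n$ odd, $\varepsilon\equiv 0$.) Then $c$ is a proper vertex coloring of $P_n$ with values in $\{1,\ldots,n-1\}$. Moreover, it is equitable: each of the $n-1$ color classes has exactly $n\,(n-2)!$ vertices.
   Context: For $n\geqslant 1$, the Pancake graph $P_n$ is the Cayley graph on the symmetric group $\mathrm{Sym}_n$, with permutations written in one-line notation $\pi=[\pi_1\pi_2\ldots\pi_n]$. Its generating set consists of the prefix-reversals $r_i$, $2\leqslant i\leqslant n$. Multiplying $\pi$ on the right by $r_i$ reverses the first $i$ entries: $\pi r_i=[\pi_i\pi_{i-1}\ldots\pi_1\pi_{i+1}\ldots\pi_n]$. Two vertices $\pi,\sigma$ are adjacent iff $\sigma=\pi r_i$ for some $2\leqslant i\leqslant n$. A proper coloring is equitable if the sizes of any two color classes differ by at most one. *)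

theory Defs
  imports Complex_Main "HOL-Combinatorics.Multiset_Permutations"
begin

text \<open>Vertices of the Pancake graph P_n: permutations of {1..n} in one-line
notation, represented as lists.\<close>
definition pancake_vertices :: "nat \<Rightarrow> nat list set" where
  "pancake_vertices n = permutations_of_set {1..n}"

definition prefix_rev :: "nat \<Rightarrow> nat list \<Rightarrow> nat list" where
  "prefix_rev i p = rev (take i p) @ drop i p"

definition pancake_adj :: "nat \<Rightarrow> nat list \<Rightarrow> nat list \<Rightarrow> bool" where
  "pancake_adj n p q \<longleftrightarrow> (\<exists>i\<in>{2..n}. q = prefix_rev i p)"

definition pancake_k :: "nat \<Rightarrow> real" where
  "pancake_k n = real n / 2"

definition pancake_f :: "nat \<Rightarrow> nat list \<Rightarrow> int" where
  "pancake_f n p = (let i = int (hd p); j = int (last p) in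
      if i > j then i - j else int n + i - j)"

definition pancake_eps :: "nat \<Rightarrow> nat list \<Rightarrow> int" where
  "pancake_eps n p =
     (if real (last p) > pancake_k n \<and> real_of_int (pancake_f n p) = pancake_k n then 1
      else if real (last p) > pancake_k n \<and> real_of_int (pancake_f n p) = pancake_k n + 1 then -1
      else 0)"

definition pancake_c :: "nat \<Rightarrow> nat list \<Rightarrow> int" where
  "pancake_c n p = pancake_f n p + pancake_eps n p"

end

(* The colour of a permutation depends only on its first entry i and last entry j.
   For fixed j the map i \<mapsto> f is i \<mapsto> (i - j) mod n, a bijection from {1..n} - {j}
   onto {1..n-1}, and \<epsilon> only swaps the colours k and k+1, so the colour stays a
   bijection in i.  Hence every colour class has exactly one first entry for each of
   the n last entries, i.e. n (n-2)! elements.  A prefix reversal of length less than n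
   keeps the last entry and changes the first, so the colour changes by injectivity;
   the full reversal swaps i and j, and c(i,j) \<noteq> c(j,i) because
   f(i,j) + f(j,i) = n while \<epsilon> moves only the colours k and k+1. *)
theory Submission
  imports Defs
begin

(* The colour c as a function of n, the first and the last entry, with the comparisons
   against k = n/2 doubled so that everything stays in the integers. *)
definition endpoint_colour :: "nat \<Rightarrow> nat \<Rightarrow> nat \<Rightarrow> int" where
  "endpoint_colour n i j =
     (let f = (if i > j then int i - int j else int n + int i - int j) in
      f + (if 2 * j > n \<and> 2 * f = int n then 1
           else if 2 * j > n \<and> 2 * f = int n + 2 then -1 else 0))"

lemma pancake_c_eq_endpoint_colour:
  "pancake_c n p = endpoint_colour n (hd p) (last p)"
proof -
  have "(real (last p) > real n / 2) = (2 * last p > n)" by linarith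
  moreover have "\<And>x::int. (real_of_int x = real n / 2) = (2 * x = int n)"
    by (simp add: field_simps) linarith
  moreover have "\<And>x::int. (real_of_int x = real n / 2 + 1) = (2 * x = int n + 2)"
    by (simp add: field_simps) linarith
  ultimately show ?thesis
    unfolding pancake_c_def pancake_eps_def pancake_k_def endpoint_colour_def Let_def
    by (simp add: pancake_f_def Let_def)
qed

lemma endpoint_colour_bij:
  assumes "3 \<le> n" "j \<in> {1..n}"
  shows "bij_betw (\<lambda>i. endpoint_colour n i j) ({1..n} - {j}) {1..int n - 1}"
proof (rule bij_betw_imageI)
  show "inj_on (\<lambda>i. endpoint_colour n i j) ({1..n} - {j})"
    using assms by (intro inj_onI) (auto simp: endpoint_colour_def Let_def split: if_splits)
  show "(\<lambda>i. endpoint_colour n i j) ` ({1..n} - {j}) = {1..int n - 1}"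
  proof (intro equalityI subsetI)
    fix m assume "m \<in> (\<lambda>i. endpoint_colour n i j) ` ({1..n} - {j})"
    then show "m \<in> {1..int n - 1}"
      using assms by (auto simp: endpoint_colour_def Let_def split: if_splits)
  next
    fix m assume m: "m \<in> {1..int n - 1}"
    define f where
      "f = (if 2 * j > n \<and> 2 * m = int n then m + 1
            else if 2 * j > n \<and> 2 * m = int n + 2 then m - 1 else m)"
    define i where "i = nat (if int j + f \<le> int n then int j + f else int j + f - int n)"
    have "i \<in> {1..n} - {j}" "endpoint_colour n i j = m"
      using assms m unfolding i_def f_def endpoint_colour_def Let_def
      by (auto split: if_splits)
    then show "m \<in> (\<lambda>i. endpoint_colour n i j) ` ({1..n} - {j})" by blast
  qed
qed

lemma endpoint_colour_swap:
  assumes "i \<in> {1..n}" "j \<in> {1..n}" "i \<noteq> j"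
  shows "endpoint_colour n i j \<noteq> endpoint_colour n j i"
  using assms by (auto simp: endpoint_colour_def Let_def split: if_splits)

lemma pancake_vertex_endpoints:
  assumes "p \<in> pancake_vertices n" "2 \<le> n"
  shows "distinct p" "length p = n" "hd p \<in> {1..n}" "last p \<in> {1..n}" "hd p \<noteq> last p"
proof -
  have s: "set p = {1..n}" and d: "distinct p"
    using assms(1) by (auto simp: pancake_vertices_def permutations_of_set_def)
  show "distinct p" by (fact d)
  show l: "length p = n" using distinct_card[OF d] s by simp
  then have "p \<noteq> []" using assms(2) by auto
  then show "hd p \<in> {1..n}" "last p \<in> {1..n}" using s by auto
  show "hd p \<noteq> last p"
    using \<open>p \<noteq> []\<close> d l assms(2) by (simp add: hd_conv_nth last_conv_nth nth_eq_iff_index_eq)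
qed

lemma prefix_rev_full: "length p \<le> i \<Longrightarrow> prefix_rev i p = rev p"
  by (simp add: prefix_rev_def)

lemma prefix_rev_in_permutations_of_set:
  "p \<in> permutations_of_set A \<Longrightarrow> prefix_rev i p \<in> permutations_of_set A"
  unfolding permutations_of_set_def prefix_rev_def
  by (metis (mono_tags, lifting) append_take_drop_id distinct_append distinct_rev mem_Collect_eq
      set_append set_rev)

lemma last_prefix_rev: "i < length p \<Longrightarrow> last (prefix_rev i p) = last p"
  by (simp add: prefix_rev_def)

lemma hd_prefix_rev_ne:
  assumes "distinct p" "2 \<le> i" "i \<le> length p"
  shows "hd (prefix_rev i p) \<noteq> hd p"
proof -
  have "take i p \<noteq> []" using assms by auto
  then have "hd (prefix_rev i p) = p ! (i - 1)"
    using assms by (simp add: prefix_rev_def hd_rev last_conv_nth)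
  moreover have "hd p = p ! 0" using assms by (cases p) auto
  moreover have "i - 1 < length p" "0 < length p" "i - 1 \<noteq> 0"
    using assms by auto
  ultimately show ?thesis
    using assms(1) by (simp add: nth_eq_iff_index_eq)
qed

lemma card_permutations_of_set_hd_last:
  assumes "finite A" "a \<in> A" "b \<in> A" "a \<noteq> b"
  shows "card {p \<in> permutations_of_set A. hd p = a \<and> last p = b} = fact (card A - 2)"
proof -
  let ?wrap = "\<lambda>q. a # q @ [b]"
  have "?wrap ` permutations_of_set (A - {a, b}) = {p \<in> permutations_of_set A. hd p = a \<and> last p = b}"
  proof (intro equalityI subsetI)
    fix p assume "p \<in> ?wrap ` permutations_of_set (A - {a, b})"
    then obtain q where "set q = A - {a, b}" "distinct q" "p = ?wrap q"
      by (auto simp: permutations_of_set_def)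
    then show "p \<in> {p \<in> permutations_of_set A. hd p = a \<and> last p = b}"
      using assms by (auto simp: permutations_of_set_def)
  next
    fix p assume "p \<in> {p \<in> permutations_of_set A. hd p = a \<and> last p = b}"
    then have s: "set p = A" and d: "distinct p" and "hd p = a" "last p = b"
      by (auto simp: permutations_of_set_def)
    then obtain t where t: "p = a # t"
      using assms by (cases p) auto
    then have "t \<noteq> []" "last t = b"
      using \<open>last p = b\<close> assms by auto
    then have p_eq: "p = ?wrap (butlast t)"
      using t by (metis append_butlast_last_id)
    with s d have "butlast t \<in> permutations_of_set (A - {a, b})"
      by (auto simp: permutations_of_set_def)
    with p_eq show "p \<in> ?wrap ` permutations_of_set (A - {a, b})"
      by blast
  qed
  moreover have "inj_on ?wrap (permutations_of_set (A - {a, b}))"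
    by (rule inj_onI) simp
  ultimately have "card {p \<in> permutations_of_set A. hd p = a \<and> last p = b}
      = card (permutations_of_set (A - {a, b}))"
    by (metis card_image)
  also have "\<dots> = fact (card (A - {a, b}))"
    using assms by simp
  also have "card (A - {a, b}) = card A - 2"
    using assms by (simp add: card_Diff_subset)
  finally show ?thesis .
qed

lemma pancake_c_range:
  assumes "3 \<le> n" "p \<in> pancake_vertices n"
  shows "pancake_c n p \<in> {1..int n - 1}"
  using bij_betw_apply[OF endpoint_colour_bij[OF assms(1)]] pancake_vertex_endpoints[OF assms(2)]
    assms(1)
  by (simp add: pancake_c_eq_endpoint_colour)

lemma pancake_c_prefix_rev_ne:
  assumes "3 \<le> n" "p \<in> pancake_vertices n" "i \<in> {2..n}"
  shows "pancake_c n p \<noteq> pancake_c n (prefix_rev i p)"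
proof -
  let ?q = "prefix_rev i p"
  have q: "?q \<in> pancake_vertices n"
    using assms(2) by (simp add: pancake_vertices_def prefix_rev_in_permutations_of_set)
  note endpoints = pancake_vertex_endpoints[OF assms(2)] pancake_vertex_endpoints[OF q]
  show ?thesis
  proof (cases "i = n")
    case True
    then show ?thesis
      using endpoints assms(1) endpoint_colour_swap[of "hd p" n "last p"]
      by (simp add: prefix_rev_full hd_rev last_rev pancake_c_eq_endpoint_colour)
  next
    case False
    then have "last ?q = last p" "hd ?q \<noteq> hd p"
      using assms endpoints by (simp_all add: last_prefix_rev hd_prefix_rev_ne)
    then show ?thesis
      using endpoints assms(1) bij_betw_imp_inj_on[OF endpoint_colour_bij[OF assms(1), of "last p"]]
      by (auto simp: pancake_c_eq_endpoint_colour dest: inj_onD)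
  qed
qed

lemma pancake_colour_class_eq:
  assumes "3 \<le> n" "m \<in> {1..int n - 1}"
  defines "first j \<equiv> the_inv_into ({1..n} - {j}) (\<lambda>i. endpoint_colour n i j) m"
  shows "{p \<in> pancake_vertices n. pancake_c n p = m}
    = (\<Union>j\<in>{1..n}. {p \<in> permutations_of_set {1..n}. hd p = first j \<and> last p = j})"
proof (intro equalityI subsetI)
  fix p assume "p \<in> {p \<in> pancake_vertices n. pancake_c n p = m}"
  then have p: "p \<in> pancake_vertices n" and "endpoint_colour n (hd p) (last p) = m"
    by (auto simp: pancake_c_eq_endpoint_colour)
  moreover have "last p \<in> {1..n}" "hd p \<in> {1..n} - {last p}"
    using pancake_vertex_endpoints[OF p] assms(1) by auto
  ultimately have "hd p = first (last p)"
    unfolding first_def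
    by (metis the_inv_into_f_eq bij_betw_imp_inj_on endpoint_colour_bij[OF assms(1)])
  then show "p \<in> (\<Union>j\<in>{1..n}. {p \<in> permutations_of_set {1..n}. hd p = first j \<and> last p = j})"
    using p \<open>last p \<in> {1..n}\<close> unfolding pancake_vertices_def by blast
next
  fix p assume "p \<in> (\<Union>j\<in>{1..n}. {p \<in> permutations_of_set {1..n}. hd p = first j \<and> last p = j})"
  then obtain j where "j \<in> {1..n}" "p \<in> permutations_of_set {1..n}" "hd p = first j" "last p = j"
    by blast
  moreover have "endpoint_colour n (first j) j = m"
    unfolding first_def
    using f_the_inv_into_f_bij_betw[OF endpoint_colour_bij[OF assms(1) \<open>j \<in> {1..n}\<close>]] assms(2)
    by blast
  ultimately show "p \<in> {p \<in> pancake_vertices n. pancake_c n p = m}"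
    unfolding pancake_vertices_def by (simp add: pancake_c_eq_endpoint_colour)
qed

lemma card_pancake_colour_class:
  assumes "3 \<le> n" "m \<in> {1..int n - 1}"
  shows "card {p \<in> pancake_vertices n. pancake_c n p = m} = n * fact (n - 2)"
proof -
  let ?first = "\<lambda>j. the_inv_into ({1..n} - {j}) (\<lambda>i. endpoint_colour n i j) m"
  have "?first j \<in> {1..n} - {j}" if "j \<in> {1..n}" for j
    using bij_betw_the_inv_into[OF endpoint_colour_bij[OF assms(1) that]] assms(2)
    by (auto dest: bij_betw_apply)
  then have "card (\<Union>j\<in>{1..n}. {p \<in> permutations_of_set {1..n}. hd p = ?first j \<and> last p = j})
      = (\<Sum>j\<in>{1..n}. fact (n - 2))"
    by (subst card_UN_disjoint) (auto simp: card_permutations_of_set_hd_last)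
  then show ?thesis
    by (simp add: pancake_colour_class_eq[OF assms])
qed

theorem theorem3:
  fixes n :: nat
  assumes "n \<ge> 3"
  shows "(\<forall>p\<in>pancake_vertices n. pancake_c n p \<in> {1..int n - 1})
    \<and> (\<forall>p\<in>pancake_vertices n. \<forall>q\<in>pancake_vertices n.
          pancake_adj n p q \<longrightarrow> pancake_c n p \<noteq> pancake_c n q)
    \<and> (\<forall>m\<in>{1..int n - 1}.
          card {p\<in>pancake_vertices n. pancake_c n p = m} = n * fact (n - 2))"
  using pancake_c_range[OF assms] pancake_c_prefix_rev_ne[OF assms]
    card_pancake_colour_class[OF assms]
  unfolding pancake_adj_def by blast

end
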